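(* Let $n\ge2$. (1) For $w\in\mathfrak S_{2n+1}$, if the arcs $\alpha_1(w)=(w_{2n},w_{2n+1})$ and $\alpha_2(w)=(w_{2n-2},w_{2n-1})$ cross, then $w\in\mathfrak B_{2n+1}$ if and only if $\mathrm{std}(w_1\cdots w_{2n-1})\in\mathfrak B_{2n-1}$. (2) For $w\in\mathfrak S_{2n}$, if the arcs $\alpha_1(w)=(w_{2n},2n+1)$ and $\alpha_2(w)=(w_{2n-2},w_{2n-1})$ cross, then $w\in\mathfrak B_{2n}$ if and only if $\mathrm{std}(w_1\cdots w_{2n-1})\in\mathfrak B_{2n-1}$.
   Context: Standardization $\mathrm{std}$ of a word of distinct integers: the permutation of $\{1,\dots,r\}$ with the same relative order. Butler permutations $\mathfrak B_N$ ($N\ge2$): for $w\in\mathfrak S_N$ define directed arcs: if $N$ even, $\alpha_1=(w_N,N+1)$, $\alpha_r=(w_{N-2r+2},w_{N-2r+3})$ ($2\le r\le N/2$), $\alpha_{N/2+1}=(0,w_1)$; if $N$ odd, $\alpha_r=(w_{N-2r+1},w_{N-2r+2})$ ($1\le r\le(N-1)/2$), $\alpha_{(N+1)/2}=(0,w_1)$. Arc $(a,b)$ is forward if $a<b$, else reverse; $(a,b)$ is nested by $(c,d)$ if $\min(c,d)<a,b<\max(c,d)$; two arcs cross if exactly one endpoint of one lies strictly between the endpoints of the other. Let $k$ be least with $\alpha_k,\alpha_{k+1}$ non-crossing; if it exists, $w$ is Butler iff ($\alpha_{k+1}$ nested by $\alpha_k$ and $\alpha_k$ reverse) or ($\alpha_{k+1}$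 not nested by $\alpha_k$ and $\alpha_k$ forward); otherwise put $k=N/2$ ($N$ even) or $(N-1)/2$ ($N$ odd) and $w$ is Butler iff $\alpha_k$ is reverse. *)

theory Defs
  imports Main
begin

definition is_perm :: "nat \<Rightarrow> nat list \<Rightarrow> bool" where
  "is_perm N w \<longleftrightarrow> length w = N \<and> distinct w \<and> set w = {1..N}"

text \<open>1-indexed entry, with the convention w_0 = 0.\<close>
definition ent :: "nat list \<Rightarrow> nat \<Rightarrow> nat" where
  "ent w i = (if i = 0 then 0 else w ! (i - 1))"

definition std :: "nat list \<Rightarrow> nat list" where
  "std xs = map (\<lambda>x. card {y \<in> set xs. y \<le> x}) xs"

definition num_arcs :: "nat \<Rightarrow> nat" where
  "num_arcs N = (if even N then N div 2 + 1 else (N + 1) div 2)"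

definition arc :: "nat \<Rightarrow> nat list \<Rightarrow> nat \<Rightarrow> nat \<times> nat" where
  "arc N w r =
     (if even N then
        (if r = 1 then (ent w N, N + 1)
         else if r = N div 2 + 1 then (0, ent w 1)
         else (ent w (N - 2*r + 2), ent w (N - 2*r + 3)))
      else
        (if r = (N + 1) div 2 then (0, ent w 1)
         else (ent w (N - 2*r + 1), ent w (N - 2*r + 2))))"

definition forward :: "nat \<times> nat \<Rightarrow> bool" where
  "forward \<alpha> \<longleftrightarrow> fst \<alpha> < snd \<alpha>"

definition reverse :: "nat \<times> nat \<Rightarrow> bool" where
  "reverse \<alpha> \<longleftrightarrow> \<not> forward \<alpha>"

definition strictly_between :: "nat \<Rightarrow> nat \<times> nat \<Rightarrow> bool" where
  "strictly_between x \<beta> \<longleftrightarrow> min (fst \<beta>) (snd \<beta>) < x \<and> x < max (fst \<beta>) (snd \<beta>)"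

definition nested_by :: "nat \<times> nat \<Rightarrow> nat \<times> nat \<Rightarrow> bool" where
  "nested_by \<alpha> \<beta> \<longleftrightarrow> strictly_between (fst \<alpha>) \<beta> \<and> strictly_between (snd \<alpha>) \<beta>"

definition crosses :: "nat \<times> nat \<Rightarrow> nat \<times> nat \<Rightarrow> bool" where
  "crosses \<alpha> \<beta> \<longleftrightarrow> (strictly_between (fst \<alpha>) \<beta> \<noteq> strictly_between (snd \<alpha>) \<beta>)"

definition butler :: "nat \<Rightarrow> nat list \<Rightarrow> bool" where
  "butler N w \<longleftrightarrow> is_perm N w \<and>
     (if \<exists>k. 1 \<le> k \<and> k + 1 \<le> num_arcs N \<and> \<not> crosses (arc N w k) (arc N w (k+1)) then
        (let k = (LEAST k. 1 \<le> k \<and> k + 1 \<le> num_arcs N \<and> \<not> crosses (arc N w k) (arc N w (k+1)))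
         in (nested_by (arc N w (k+1)) (arc N w k) \<and> reverse (arc N w k)) \<or>
            (\<not> nested_by (arc N w (k+1)) (arc N w k) \<and> forward (arc N w k)))
      else reverse (arc N w (if even N then N div 2 else (N - 1) div 2)))"

end

theory Submission
  imports Defs
begin

(* The arcs alpha_2, alpha_3, ... of w are exactly the arcs alpha_1, alpha_2, ... of the
   prefix w_1 ... w_(2n-1), and standardizing that prefix relabels their endpoints by an
   order-preserving map, which changes neither crossing, nesting nor orientation. When
   alpha_1 and alpha_2 cross, the Butler test of w never looks at alpha_1 again, so it runs
   exactly like the test of the standardized prefix, shifted by one arc. *)

definition butler_criterion :: "nat \<Rightarrow> (nat \<Rightarrow> nat \<times> nat) \<Rightarrow> nat \<Rightarrow> bool" where
  "butler_criterion m A i =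
     (if \<exists>k. 1 \<le> k \<and> k + 1 \<le> m \<and> \<not> crosses (A k) (A (k+1)) then
        (let k = (LEAST k. 1 \<le> k \<and> k + 1 \<le> m \<and> \<not> crosses (A k) (A (k+1)))
         in (nested_by (A (k+1)) (A k) \<and> reverse (A k)) \<or>
            (\<not> nested_by (A (k+1)) (A k) \<and> forward (A k)))
      else reverse (A i))"

lemma butler_iff_criterion:
  "butler N w \<longleftrightarrow> is_perm N w \<and>
     butler_criterion (num_arcs N) (arc N w) (if even N then N div 2 else (N - 1) div 2)"
  unfolding butler_def butler_criterion_def by simp

lemma butler_criterion_cong:
  assumes cross_eq: "\<And>k. 1 \<le> k \<Longrightarrow> k < m \<Longrightarrow> crosses (B k) (B (k+1)) = crosses (A k) (A (k+1))"
    and nested_eq: "\<And>k. 1 \<le> k \<Longrightarrow> k < m \<Longrightarrow> nested_by (B (k+1)) (B k) = nested_by (A (k+1)) (A k)"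
    and forward_eq: "\<And>k. 1 \<le> k \<Longrightarrow> k < m \<Longrightarrow> forward (B k) = forward (A k)"
    and forward_i: "forward (B i) = forward (A i)"
  shows "butler_criterion m B i = butler_criterion m A i"
proof -
  define P where "P C k \<longleftrightarrow> 1 \<le> k \<and> k + 1 \<le> m \<and> \<not> crosses (C k) (C (k+1))"
    for C :: "nat \<Rightarrow> nat \<times> nat" and k
  have PBA: "P B = P A"
    unfolding P_def using cross_eq by fastforce
  show ?thesis
  proof (cases "\<exists>k. P A k")
    case True
    define k where "k = (LEAST k. P A k)"
    have "P A k" unfolding k_def using True by (metis LeastI)
    then have "1 \<le> k" "k < m" unfolding P_def by auto
    then show ?thesis
      using True PBA nested_eq forward_eq unfolding butler_criterion_def P_def[abs_def] k_def reverse_def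
      by (simp add: Let_def)
  next
    case False
    then show ?thesis
      using PBA forward_i unfolding butler_criterion_def P_def[abs_def] reverse_def by auto
  qed
qed

lemma butler_criterion_Suc:
  assumes "crosses (A 1) (A 2)"
  shows "butler_criterion (Suc m) A (Suc i) = butler_criterion m (\<lambda>r. A (Suc r)) i"
proof -
  define P where "P k \<longleftrightarrow> 1 \<le> k \<and> k + 1 \<le> Suc m \<and> \<not> crosses (A k) (A (k+1))" for k
  define Q where "Q k \<longleftrightarrow> 1 \<le> k \<and> k + 1 \<le> m \<and> \<not> crosses (A (Suc k)) (A (Suc (k+1)))" for k
  have PQ: "P (Suc k) = Q k" for k
    using assms unfolding P_def Q_def by (cases k) (auto simp: numeral_2_eq_2)
  have "\<not> P 0" unfolding P_def by simp
  then have ex: "(\<exists>k. P k) = (\<exists>k. Q k)"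
    by (metis PQ not0_implies_Suc)
  have lhs: "butler_criterion (Suc m) A (Suc i) =
      (if \<exists>k. P k then let k = Suc (LEAST k. Q k) in
         (nested_by (A (k+1)) (A k) \<and> reverse (A k)) \<or> (\<not> nested_by (A (k+1)) (A k) \<and> forward (A k))
       else reverse (A (Suc i)))"
    unfolding butler_criterion_def P_def[symmetric]
    using Least_Suc2[of P _ Q] \<open>\<not> P 0\<close> PQ ex by auto
  show ?thesis
    unfolding lhs ex unfolding butler_criterion_def Q_def by (auto simp: Let_def)
qed

lemma strictly_between_map_prod:
  assumes "strict_mono_on S g" "x \<in> S" "fst \<beta> \<in> S" "snd \<beta> \<in> S"
  shows "strictly_between (g x) (map_prod g g \<beta>) = strictly_between x \<beta>"
  using assms strict_mono_on_less[OF assms(1)] strict_mono_on_less_eq[OF assms(1)]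
  unfolding strictly_between_def by (cases \<beta>) (auto simp: min_def max_def)

lemma
  assumes "strict_mono_on S g" "fst \<alpha> \<in> S" "snd \<alpha> \<in> S" "fst \<beta> \<in> S" "snd \<beta> \<in> S"
  shows crosses_map_prod: "crosses (map_prod g g \<alpha>) (map_prod g g \<beta>) = crosses \<alpha> \<beta>"
    and nested_by_map_prod: "nested_by (map_prod g g \<alpha>) (map_prod g g \<beta>) = nested_by \<alpha> \<beta>"
  using assms strictly_between_map_prod[OF assms(1) _ assms(4,5)]
  unfolding crosses_def nested_by_def by (cases \<alpha>; auto)+

lemma forward_map_prod:
  assumes "strict_mono_on S g" "fst \<alpha> \<in> S" "snd \<alpha> \<in> S"
  shows "forward (map_prod g g \<alpha>) = forward \<alpha>"
  using strict_mono_on_less[OF assms] unfolding forward_def by (cases \<alpha>) simp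

lemma butler_criterion_relabel:
  assumes g: "strict_mono_on S g"
    and B: "\<And>r. 1 \<le> r \<Longrightarrow> r \<le> m \<Longrightarrow> B r = map_prod g g (A r)"
    and A: "\<And>r. 1 \<le> r \<Longrightarrow> r \<le> m \<Longrightarrow> fst (A r) \<in> S \<and> snd (A r) \<in> S"
    and i: "1 \<le> i" "i \<le> m"
  shows "butler_criterion m B i = butler_criterion m A i"
  by (rule butler_criterion_cong)
    (use B A i crosses_map_prod[OF g] nested_by_map_prod[OF g] forward_map_prod[OF g] in auto)

definition rank :: "nat list \<Rightarrow> nat \<Rightarrow> nat" where
  "rank xs x = card {y \<in> set xs. y \<le> x}"

lemma std_eq_map_rank: "std xs = map (rank xs) xs"
  unfolding std_def rank_def ..

text \<open>Only the larger of two compared values needs to occur in xs, so 0 can be adjoined.\<close>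
lemma strict_mono_on_rank: "strict_mono_on (insert 0 (set xs)) (rank xs)"
proof (rule strict_mono_onI)
  fix a b assume "a \<in> insert 0 (set xs)" "b \<in> insert 0 (set xs)" "a < b"
  then have "b \<in> {y \<in> set xs. y \<le> b}" "b \<notin> {y \<in> set xs. y \<le> a}" by auto
  moreover have "{y \<in> set xs. y \<le> a} \<subseteq> {y \<in> set xs. y \<le> b}" using \<open>a < b\<close> by auto
  ultimately have "{y \<in> set xs. y \<le> a} \<subset> {y \<in> set xs. y \<le> b}" by blast
  then show "rank xs a < rank xs b" unfolding rank_def by (simp add: psubset_card_mono)
qed

lemma rank_0: "0 \<notin> set xs \<Longrightarrow> rank xs 0 = 0"
  unfolding rank_def by auto

lemma is_perm_std:
  assumes "distinct xs"
  shows "is_perm (length xs) (std xs)"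
proof -
  have inj: "inj_on (rank xs) (set xs)"
    using strict_mono_on_imp_inj_on[OF strict_mono_on_rank] by (rule inj_on_subset) auto
  have "rank xs ` set xs \<subseteq> {1..card (set xs)}"
  proof
    fix z assume "z \<in> rank xs ` set xs"
    then obtain x where x: "x \<in> set xs" "z = rank xs x" by auto
    then have "{y \<in> set xs. y \<le> x} \<noteq> {}" by auto
    then show "z \<in> {1..card (set xs)}"
      unfolding x rank_def by (auto simp: Suc_le_eq card_gt_0_iff intro: card_mono)
  qed
  moreover have "card (rank xs ` set xs) = card (set xs)"
    by (rule card_image[OF inj])
  ultimately have "rank xs ` set xs = {1..length xs}"
    using distinct_card[OF assms] by (intro card_subset_eq) auto
  then show ?thesis
    unfolding is_perm_def std_eq_map_rank using inj assms by (simp add: distinct_map)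
qed

lemma arc_odd_ent:
  assumes "odd M" "1 \<le> r" "r \<le> num_arcs M"
  obtains i j where "i \<le> M" "j \<le> M" "arc M w r = (ent w i, ent w j)"
proof (cases "r = (M + 1) div 2")
  case True
  then show ?thesis
    using that[of 0 1] assms by (auto simp: arc_def ent_def elim: oddE)
next
  case False
  then show ?thesis
    using that[of "M - 2*r + 1" "M - 2*r + 2"] assms by (auto simp: arc_def num_arcs_def elim!: oddE)
qed

lemma arc_odd_map:
  assumes "odd M" "1 \<le> r" "r \<le> num_arcs M" "f 0 = 0"
    and "\<And>i. 1 \<le> i \<Longrightarrow> i \<le> M \<Longrightarrow> ent v i = f (ent w i)"
  shows "arc M v r = map_prod f f (arc M w r)"
proof -
  have ent: "i \<le> M \<Longrightarrow> ent v i = f (ent w i)" for i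
    using assms(4,5) by (cases "i = 0") (auto simp: ent_def)
  show ?thesis
    using assms(1-4) ent[of 1] ent[of "M - 2*r + 1"] ent[of "M - 2*r + 2"]
    by (auto simp: arc_def num_arcs_def elim!: oddE)
qed

lemma arc_Suc_eq_arc_odd:
  assumes "N = 2*n + 1 \<or> N = 2*n" "1 \<le> r" "r \<le> n"
  shows "arc N w (Suc r) = arc (2*n - 1) w r"
proof (cases "r = n")
  case True
  then show ?thesis using assms by (auto simp: arc_def)
next
  case False
  then show ?thesis using assms by (auto simp: arc_def intro!: arg_cong[of _ _ "ent w"])
qed

lemma ent_in_take:
  assumes "i \<le> M" "M \<le> length w"
  shows "ent w i \<in> insert 0 (set (take M w))"
proof (cases "i = 0")
  case False
  then have "take M w ! (i - 1) \<in> set (take M w)" using assms by (intro nth_mem) simp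
  then show ?thesis using False assms by (simp add: ent_def)
qed (simp add: ent_def)

lemma ent_std_take:
  assumes "1 \<le> i" "i \<le> M" "M \<le> length w"
  shows "ent (std (take M w)) i = rank (take M w) (ent w i)"
  using assms by (simp add: ent_def std_eq_map_rank)

lemma butler_iff_butler_std_prefix:
  assumes n: "2 \<le> n" and N: "N = 2*n + 1 \<or> N = 2*n"
    and w: "is_perm N w" and cross: "crosses (arc N w 1) (arc N w 2)"
  shows "butler N w \<longleftrightarrow> butler (2*n - 1) (std (take (2*n - 1) w))"
proof -
  define M where "M = 2*n - 1"
  define xs where "xs = take M w"
  have M: "odd M" "num_arcs M = n" "M \<le> length w"
    using n N w by (auto simp: M_def num_arcs_def is_perm_def)
  have xs: "distinct xs" "0 \<notin> set xs" "length xs = M"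
    using w M(3) by (auto simp: xs_def is_perm_def dest: in_set_takeD)
  have endpoints: "fst (arc N w (Suc r)) \<in> insert 0 (set xs) \<and> snd (arc N w (Suc r)) \<in> insert 0 (set xs)"
    if r: "1 \<le> r" "r \<le> n" for r
  proof -
    obtain i j where "i \<le> M" "j \<le> M" "arc M w r = (ent w i, ent w j)"
      using arc_odd_ent[OF M(1) r(1)] r(2) M(2) by metis
    then show ?thesis
      using r arc_Suc_eq_arc_odd[OF N] ent_in_take[OF _ M(3)] by (simp add: M_def xs_def)
  qed
  have relabelled: "arc M (std xs) r = map_prod (rank xs) (rank xs) (arc N w (Suc r))"
    if r: "1 \<le> r" "r \<le> n" for r
  proof -
    have "arc M (std xs) r = map_prod (rank xs) (rank xs) (arc M w r)"
      by (rule arc_odd_map[OF M(1) r(1)])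
        (use r M rank_0[OF xs(2)] ent_std_take[OF _ _ M(3)] in \<open>auto simp: xs_def\<close>)
    then show ?thesis using arc_Suc_eq_arc_odd[OF N r] by (simp add: M_def)
  qed
  have "butler_criterion (Suc n) (arc N w) (Suc (n - 1)) = butler_criterion n (\<lambda>r. arc N w (Suc r)) (n - 1)"
    using butler_criterion_Suc[OF cross] .
  also have "\<dots> = butler_criterion n (arc M (std xs)) (n - 1)"
    using butler_criterion_relabel[OF strict_mono_on_rank, of n "arc M (std xs)"] relabelled endpoints n
    by simp
  finally have criteria: "butler_criterion (Suc n) (arc N w) (Suc (n - 1))
      = butler_criterion n (arc M (std xs)) (n - 1)" .
  have "num_arcs N = Suc n" "(if even N then N div 2 else (N - 1) div 2) = Suc (n - 1)"
    "(if even M then M div 2 else (M - 1) div 2) = n - 1"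
    using n N by (auto simp: M_def num_arcs_def)
  then have "butler N w \<longleftrightarrow> butler M (std xs)"
    using criteria w is_perm_std[OF xs(1)] xs(3) M(2) by (simp add: butler_iff_criterion)
  then show ?thesis by (simp add: M_def xs_def)
qed

theorem lemma4p5:
  fixes n :: nat
  assumes "n \<ge> 2"
  shows "(\<forall>w. is_perm (2*n+1) w \<longrightarrow> crosses (arc (2*n+1) w 1) (arc (2*n+1) w 2) \<longrightarrow>
            (butler (2*n+1) w \<longleftrightarrow> butler (2*n-1) (std (take (2*n-1) w))))
       \<and> (\<forall>w. is_perm (2*n) w \<longrightarrow> crosses (arc (2*n) w 1) (arc (2*n) w 2) \<longrightarrow>
            (butler (2*n) w \<longleftrightarrow> butler (2*n-1) (std (take (2*n-1) w))))"
  using butler_iff_butler_std_prefix[OF assms] by blast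

end
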